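(* Let $n\ge3$, $\boldsymbol\ell$ positive lengths, $\mu,\tau^*\in\mathbb{R}$, $N>0$ a smooth function on $T^n$ depending only on $s^1$, and $Z=z(s^1)\partial_{s^1}$ a smooth vector field. Consider the CTS-H$^{**}$ conformal data set $(g_{\boldsymbol\ell},\mu\sigma^\flat_{\boldsymbol\ell},\tau^*,Z,N)$. (1) If $\mu$ and $\tau^*$ are nonzero and have the same sign, then $\phi\equiv c=(\mu/\tau^* )^{1/q}$, $W=Z$ is a solution of the CTS-H$^{**}$ equations, and the generated solution of the constraint equations is $$\bar g=g_{r\boldsymbol\ell},\qquad \bar K=\bar\tau\,(r\ell_1)^2(ds^1)^2,\qquad \bar\tau=\tau^*+c^{-q}\tfrac1N\mathrm{div}_{g_{\boldsymbol\ell}}Z,\qquad r=c^{(q-2)/2}=(\mu/\tau^* )^{1/n}.$$ (2) If $\mu=\tau^*=0$, then for every $c>0$, $\phi\equiv c$, $W=Z$ is a solution of the CTS-H$^{**}$ equations, and the associated solution of the constraint equations is $\bar g=g_{r\boldsymbol\ell}$, $\bar K=\bar\tau(r\ell_1)^2(ds^1)^2$ with $\bar\tau=c^{-q}\frac1N\mathrm{div}_{g_{\boldsymbol\ell}}Z$ and $r=c^{(q-2)/2}$.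
   Context: $q=\frac{2n}{n-2}$, $\kappa=\frac{n-1}{n}$. $T^n=(\mathbb{R}/\mathbb{Z})^n$ with unit coordinates $(s^1,\ldots,s^n)$; $g_{\boldsymbol\ell}=\sum_k\ell_k^2(ds^k)^2$; $r\boldsymbol\ell=(r\ell_1,\ldots,r\ell_n)$; $\sigma^\flat_{\boldsymbol\ell}=\kappa\ell_1^2(ds^1)^2-\frac1n\sum_{k\ge2}\ell_k^2(ds^k)^2$ (transverse-traceless for $g_{\boldsymbol\ell}$). $\mathcal{L}_gW=L_Wg-\frac2n(\mathrm{div}_gW)g$. CTS-H$^{**}$ (drift-parameterized mean curvature) method: data $(g,\sigma,\tau^*,Z,N)$ with $\sigma$ transverse-traceless, $\tau^*$ constant, $Z$ a vector field (the drift), $N>0$. A solution of the CTS-H$^{**}$ equations is a pair $(\phi,W)$, $\phi>0$, $W$ a vector field, such that $$\bar g=\phi^{q-2}g,\qquad \bar K=\phi^{-2}\Big(\sigma+\tfrac1{2N}\mathcal{L}_gW\Big)+\frac{\tau^*+\frac{\phi^{-2q}}{N}\mathrm{div}_g(\phi^qZ)}{n}\bar g$$ solves the Einstein constraint equations $R_{\bar g}-|\bar K|^2+(\mathrm{tr}\bar K)^2=0$, $\mathrm{div}_{\bar g}\bar K=d\,\mathrm{tr}_{\bar g}\bar K$; this is the generated solution. *)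

theory Defs
  imports "HOL-Analysis.Analysis"
begin

text \<open>Points are
  represented by coordinates x :: real^'n; functions on T^n are Z^n-periodic
  functions on R^n.  The distinguished coordinate s^1 is an arbitrary fixed
  index a :: 'n.  Symmetric 2-tensors are matrix-valued functions
  real^'n => real^'n^'n (entries T x $ i $ j), vector fields are
  functions real^'n => real^'n.\<close>

definition qexp :: "nat \<Rightarrow> real" where
  "qexp n = 2 * real n / (real n - 2)"

definition kappa :: "nat \<Rightarrow> real" where
  "kappa n = (real n - 1) / real n"

definition pd :: "'n::finite \<Rightarrow> (real^'n \<Rightarrow> real) \<Rightarrow> real^'n \<Rightarrow> real" where
  "pd i f x = deriv (\<lambda>t. f (x + t *\<^sub>R axis i 1)) 0"

fun pds :: "'n::finite list \<Rightarrow> (real^'n \<Rightarrow> real) \<Rightarrow> real^'n \<Rightarrow> real" where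
  "pds [] f = f"
| "pds (i # is) f = pd i (pds is f)"

definition smooth_fun :: "(real^'n::finite \<Rightarrow> real) \<Rightarrow> bool" where
  "smooth_fun f \<longleftrightarrow> (\<forall>is. continuous_on UNIV (pds is f) \<and>
      (\<forall>i x. (\<lambda>t. pds is f (x + t *\<^sub>R axis i 1)) differentiable (at 0)))"

definition periodic_fun :: "(real^'n::finite \<Rightarrow> 'b) \<Rightarrow> bool" where
  "periodic_fun f \<longleftrightarrow> (\<forall>x i. f (x + axis i 1) = f x)"

definition torus_fun :: "(real^'n::finite \<Rightarrow> real) \<Rightarrow> bool" where
  "torus_fun f \<longleftrightarrow> smooth_fun f \<and> periodic_fun f"

definition torus_vf :: "(real^'n::finite \<Rightarrow> real^'n) \<Rightarrow> bool" where
  "torus_vf W \<longleftrightarrow> (\<forall>i. torus_fun (\<lambda>x. W x $ i))"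

definition smooth_real :: "(real \<Rightarrow> real) \<Rightarrow> bool" where
  "smooth_real f \<longleftrightarrow> (\<forall>k x. ((deriv ^^ k) f) differentiable (at x))"

definition ginv :: "(real^'n::finite \<Rightarrow> real^'n^'n) \<Rightarrow> real^'n \<Rightarrow> real^'n^'n" where
  "ginv g x = matrix_inv (g x)"

definition christ :: "(real^'n::finite \<Rightarrow> real^'n^'n) \<Rightarrow> 'n \<Rightarrow> 'n \<Rightarrow> 'n \<Rightarrow> real^'n \<Rightarrow> real" where
  "christ g k i j x = (\<Sum>l\<in>UNIV. ginv g x $ k $ l *
      (pd i (\<lambda>y. g y $ j $ l) x + pd j (\<lambda>y. g y $ i $ l) x - pd l (\<lambda>y. g y $ i $ j) x)) / 2"

definition ricci :: "(real^'n::finite \<Rightarrow> real^'n^'n) \<Rightarrow> 'n \<Rightarrow> 'n \<Rightarrow> real^'n \<Rightarrow> real" where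
  "ricci g j k x = (\<Sum>i\<in>UNIV. pd i (christ g i j k) x - pd j (christ g i i k) x
      + (\<Sum>p\<in>UNIV. christ g i i p x * christ g p j k x - christ g i j p x * christ g p i k x))"

definition scalar_curv :: "(real^'n::finite \<Rightarrow> real^'n^'n) \<Rightarrow> real^'n \<Rightarrow> real" where
  "scalar_curv g x = (\<Sum>j\<in>UNIV. \<Sum>k\<in>UNIV. ginv g x $ j $ k * ricci g j k x)"

definition trace_g :: "(real^'n::finite \<Rightarrow> real^'n^'n) \<Rightarrow> (real^'n \<Rightarrow> real^'n^'n) \<Rightarrow> real^'n \<Rightarrow> real" where
  "trace_g g K x = (\<Sum>i\<in>UNIV. \<Sum>j\<in>UNIV. ginv g x $ i $ j * K x $ i $ j)"

definition normsq_g :: "(real^'n::finite \<Rightarrow> real^'n^'n) \<Rightarrow> (real^'n \<Rightarrow> real^'n^'n) \<Rightarrow> real^'n \<Rightarrow> real" where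
  "normsq_g g K x = (\<Sum>i\<in>UNIV. \<Sum>j\<in>UNIV. \<Sum>k\<in>UNIV. \<Sum>l\<in>UNIV.
      ginv g x $ i $ k * ginv g x $ j $ l * K x $ i $ j * K x $ k $ l)"

definition cov_deriv2 :: "(real^'n::finite \<Rightarrow> real^'n^'n) \<Rightarrow> (real^'n \<Rightarrow> real^'n^'n) \<Rightarrow> 'n \<Rightarrow> 'n \<Rightarrow> 'n \<Rightarrow> real^'n \<Rightarrow> real" where
  "cov_deriv2 g K k i j x = pd k (\<lambda>y. K y $ i $ j) x
      - (\<Sum>p\<in>UNIV. christ g p k i x * K x $ p $ j)
      - (\<Sum>p\<in>UNIV. christ g p k j x * K x $ i $ p)"

definition div_tensor :: "(real^'n::finite \<Rightarrow> real^'n^'n) \<Rightarrow> (real^'n \<Rightarrow> real^'n^'n) \<Rightarrow> 'n \<Rightarrow> real^'n \<Rightarrow> real" where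
  "div_tensor g K j x = (\<Sum>i\<in>UNIV. \<Sum>k\<in>UNIV. ginv g x $ i $ k * cov_deriv2 g K k i j x)"

definition div_vf :: "(real^'n::finite \<Rightarrow> real^'n^'n) \<Rightarrow> (real^'n \<Rightarrow> real^'n) \<Rightarrow> real^'n \<Rightarrow> real" where
  "div_vf g W x = (\<Sum>i\<in>UNIV. pd i (\<lambda>y. W y $ i) x + (\<Sum>p\<in>UNIV. christ g i i p x * W x $ p))"

definition lie_metric :: "(real^'n::finite \<Rightarrow> real^'n^'n) \<Rightarrow> (real^'n \<Rightarrow> real^'n) \<Rightarrow> real^'n \<Rightarrow> real^'n^'n" where
  "lie_metric g W x = (\<chi> i j. \<Sum>k\<in>UNIV. W x $ k * pd k (\<lambda>y. g y $ i $ j) x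
      + g x $ k $ j * pd i (\<lambda>y. W y $ k) x + g x $ i $ k * pd j (\<lambda>y. W y $ k) x)"

definition conf_killing :: "(real^'n::finite \<Rightarrow> real^'n^'n) \<Rightarrow> (real^'n \<Rightarrow> real^'n) \<Rightarrow> real^'n \<Rightarrow> real^'n^'n" where
  "conf_killing g W x = lie_metric g W x - (2 / real CARD('n) * div_vf g W x) *\<^sub>R g x"

definition constraint_eqs :: "(real^'n::finite \<Rightarrow> real^'n^'n) \<Rightarrow> (real^'n \<Rightarrow> real^'n^'n) \<Rightarrow> bool" where
  "constraint_eqs gb Kb \<longleftrightarrow>
     (\<forall>x. scalar_curv gb x - normsq_g gb Kb x + (trace_g gb Kb x)\<^sup>2 = 0) \<and>
     (\<forall>x j. div_tensor gb Kb j x = pd j (trace_g gb Kb) x)"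

definition cts_gbar :: "(real^'n::finite \<Rightarrow> real^'n^'n) \<Rightarrow> (real^'n \<Rightarrow> real) \<Rightarrow> real^'n \<Rightarrow> real^'n^'n" where
  "cts_gbar g \<phi> x = (\<phi> x powr (qexp CARD('n) - 2)) *\<^sub>R g x"

definition cts_Kbar :: "(real^'n::finite \<Rightarrow> real^'n^'n) \<Rightarrow> (real^'n \<Rightarrow> real^'n^'n) \<Rightarrow> real
    \<Rightarrow> (real^'n \<Rightarrow> real^'n) \<Rightarrow> (real^'n \<Rightarrow> real) \<Rightarrow> (real^'n \<Rightarrow> real) \<Rightarrow> (real^'n \<Rightarrow> real^'n)
    \<Rightarrow> real^'n \<Rightarrow> real^'n^'n" where
  "cts_Kbar g \<sigma> \<tau> Z N \<phi> W x =
     (\<phi> x powr (-2)) *\<^sub>R (\<sigma> x + (1 / (2 * N x)) *\<^sub>R conf_killing g W x)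
     + ((\<tau> + \<phi> x powr (- 2 * qexp CARD('n)) / N x
            * div_vf g (\<lambda>y. (\<phi> y powr qexp CARD('n)) *\<^sub>R Z y) x) / real CARD('n))
       *\<^sub>R cts_gbar g \<phi> x"

definition cts_solution :: "(real^'n::finite \<Rightarrow> real^'n^'n) \<Rightarrow> (real^'n \<Rightarrow> real^'n^'n) \<Rightarrow> real
    \<Rightarrow> (real^'n \<Rightarrow> real^'n) \<Rightarrow> (real^'n \<Rightarrow> real) \<Rightarrow> (real^'n \<Rightarrow> real) \<Rightarrow> (real^'n \<Rightarrow> real^'n) \<Rightarrow> bool" where
  "cts_solution g \<sigma> \<tau> Z N \<phi> W \<longleftrightarrow>
     (\<forall>x. \<phi> x > 0) \<and> torus_fun \<phi> \<and> torus_vf W \<and>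
     constraint_eqs (cts_gbar g \<phi>) (cts_Kbar g \<sigma> \<tau> Z N \<phi> W)"

definition g_flat :: "real^'n::finite \<Rightarrow> real^'n \<Rightarrow> real^'n^'n" where
  "g_flat l x = (\<chi> i j. if i = j then (l $ i)\<^sup>2 else 0)"

definition sigma_flat :: "'n::finite \<Rightarrow> real^'n \<Rightarrow> real^'n \<Rightarrow> real^'n^'n" where
  "sigma_flat a l x = (\<chi> i j. if i = j then (if i = a then kappa CARD('n) * (l $ a)\<^sup>2
                                         else - (1 / real CARD('n)) * (l $ i)\<^sup>2) else 0)"

definition dsq :: "'n::finite \<Rightarrow> real^'n^'n" where
  "dsq a = (\<chi> i j. if i = a \<and> j = a then 1 else 0)"

end

theory Submission
  imports Defs
begin

text \<open>For a drift \<open>Z = z(s\<^sup>1) \<partial>\<^sub>s\<^sub>1\<close> on a flat torus, \<open>\<L>\<^sub>g Z\<close> is \<open>2 z'\<close> times the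
  same tensor \<open>\<ell>\<^sub>1\<^sup>2 (ds\<^sup>1)\<^sup>2 - g/n\<close> as \<open>\<sigma>\<^sup>\<flat>\<close>. With \<open>\<phi> \<equiv> c\<close> and \<open>\<mu> = \<tau>\<^sup>* c\<^sup>q\<close> the
  multiples of \<open>g\<close> in \<open>K\<close> then cancel, leaving \<open>K = f(s\<^sup>1) (ds\<^sup>1)\<^sup>2\<close> on the flat metric
  \<open>c\<^sup>q\<^sup>-\<^sup>2 g\<close>. Such a \<open>K\<close> has a single nonzero eigenvalue, so \<open>|K|\<^sup>2 = (tr K)\<^sup>2\<close> and
  \<open>div K = d(tr K)\<close>: both constraint equations hold identically.\<close>

lemma pd_const [simp]: "pd i (\<lambda>_. c) x = 0"
  by (simp add: pd_def)

lemma pd_fun_coord: "pd i (\<lambda>y. h (y $ a)) x = (if i = a then deriv h (x $ a) else 0)"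
proof (cases "i = a")
  case True
  have "pd a (\<lambda>y. h (y $ a)) x = deriv (\<lambda>t. h (x $ a + t)) 0"
    by (simp add: pd_def)
  also have "\<dots> = deriv h (x $ a)"
    unfolding deriv_shift_0[of h "x $ a"] by (simp add: o_def)
  finally show ?thesis
    using True by simp
qed (simp add: pd_def axis_def)

lemma matrix_inv_unique:
  fixes A B :: "'a::semiring_1^'n^'n"
  assumes "A ** B = mat 1" "B ** A = mat 1"
  shows "matrix_inv A = B"
proof -
  have "A ** matrix_inv A = mat 1 \<and> matrix_inv A ** A = mat 1"
    unfolding matrix_inv_def by (rule someI) (use assms in blast)
  then have "matrix_inv A = matrix_inv A ** (A ** B)"
    by (simp add: assms)
  also have "\<dots> = B"
    using \<open>A ** matrix_inv A = mat 1 \<and> matrix_inv A ** A = mat 1\<close>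
    by (simp add: matrix_mul_assoc)
  finally show ?thesis .
qed

lemma diagonal_matrix_mult:
  "(\<chi> i j. if i = j then f i else 0) ** (\<chi> i j. if i = j then g i else 0)
     = (\<chi> i j. if i = j then f i * g i else 0)"
  for f g :: "'n::finite \<Rightarrow> 'a::semiring_1"
proof -
  have "(if i = k then f i else 0) * (if k = j then g k else 0)
      = (if k = i then if i = j then f i * g i else 0 else (0::'a))" for i j k :: 'n
    by auto
  then show ?thesis
    by (simp add: vec_eq_iff matrix_matrix_mult_def)
qed

lemma ginv_g_flat:
  assumes "\<forall>k. m $ k \<noteq> 0"
  shows "ginv (g_flat m) x = (\<chi> i j. if i = j then 1 / (m $ i)\<^sup>2 else 0)"
  unfolding ginv_def g_flat_def
  by (intro matrix_inv_unique) (simp_all add: diagonal_matrix_mult vec_eq_iff mat_def assms)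

lemma christ_g_flat [simp]: "christ (g_flat m) k i j = (\<lambda>_. 0)"
  by (simp add: fun_eq_iff christ_def g_flat_def)

lemma scalar_curv_g_flat [simp]: "scalar_curv (g_flat m) x = 0"
  by (simp add: scalar_curv_def ricci_def)

lemma dsq_nth [simp]: "dsq a $ i $ j = (if i = a then if j = a then 1 else 0 else 0)"
  by (simp add: dsq_def)

lemma constraint_eqs_g_flat_dsq:
  fixes m :: "real^'n::finite" and a :: 'n and f :: "real \<Rightarrow> real"
  assumes m: "\<forall>k. m $ k \<noteq> 0" and f: "\<And>s. f differentiable (at s)"
  defines "K \<equiv> \<lambda>x. f (x $ a) *\<^sub>R dsq a"
  shows "constraint_eqs (g_flat m) K"
proof -
  let ?t = "\<lambda>s. f s / (m $ a)\<^sup>2"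
  have ginv: "ginv (g_flat m) x $ i $ j = (if i = j then 1 / (m $ i)\<^sup>2 else 0)" for x i j
    using ginv_g_flat[OF m] by simp
  have "ginv (g_flat m) x $ i $ j * K x $ i $ j = (if j = a then if i = a then ?t (x $ a) else 0 else 0)"
    for x i j
    by (simp add: ginv K_def)
  then have trace: "trace_g (g_flat m) K = (\<lambda>x. ?t (x $ a))"
    by (simp add: fun_eq_iff trace_g_def)
  have "ginv (g_flat m) x $ i $ k * ginv (g_flat m) x $ j $ l * K x $ i $ j * K x $ k $ l
      = (if l = a then if k = a then if j = a then if i = a then (?t (x $ a))\<^sup>2 else 0 else 0 else 0 else 0)"
    for x i j k l
    by (simp add: ginv K_def power2_eq_square)
  then have "normsq_g (g_flat m) K x = (trace_g (g_flat m) K x)\<^sup>2" for x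
    by (simp add: normsq_g_def trace)
  moreover have "div_tensor (g_flat m) K j x = pd j (trace_g (g_flat m) K) x" for j x
  proof -
    have "pd k (\<lambda>y. K y $ i $ j) x = (if k = a \<and> i = a \<and> j = a then deriv f (x $ a) else 0)" for k i
      using pd_fun_coord[of k "\<lambda>s. if i = a \<and> j = a then f s else 0" a x]
      by (cases "i = a \<and> j = a") (simp_all add: K_def)
    then have "ginv (g_flat m) x $ i $ k * cov_deriv2 (g_flat m) K k i j x
        = (if k = a then if i = a then if j = a then deriv f (x $ a) / (m $ a)\<^sup>2 else 0 else 0 else 0)"
      for i k
      by (simp add: ginv cov_deriv2_def)
    moreover have "deriv ?t (x $ a) = deriv f (x $ a) / (m $ a)\<^sup>2"
      by (intro DERIV_imp_deriv DERIV_cdivide) (simp add: DERIV_deriv_iff_real_differentiable f)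
    ultimately show ?thesis
      using pd_fun_coord[of j ?t a x] by (simp add: div_tensor_def trace)
  qed
  ultimately show ?thesis
    unfolding constraint_eqs_def by simp
qed

definition coord_vf :: "'n::finite \<Rightarrow> (real \<Rightarrow> real) \<Rightarrow> real^'n \<Rightarrow> real^'n" where
  "coord_vf a z x = z (x $ a) *\<^sub>R axis a 1"

lemma coord_vf_nth: "coord_vf a z x $ k = (if k = a then z (x $ a) else 0)"
  by (simp add: coord_vf_def axis_def)

lemma pd_coord_vf: "pd i (\<lambda>y. coord_vf a z y $ k) x = (if i = a \<and> k = a then deriv z (x $ a) else 0)"
  using pd_fun_coord[of i "\<lambda>s. if k = a then z s else 0" a x] by (auto simp: coord_vf_nth)

lemma div_vf_g_flat_coord_vf: "div_vf (g_flat m) (coord_vf a z) x = deriv z (x $ a)"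
  by (simp add: div_vf_def pd_coord_vf)

lemma scaleR_coord_vf: "(\<lambda>x. c *\<^sub>R coord_vf a z x) = coord_vf a (\<lambda>s. c * z s)"
  by (simp add: fun_eq_iff coord_vf_def)

lemma sigma_flat_eq: "sigma_flat a l x = (l $ a)\<^sup>2 *\<^sub>R dsq a - (1 / real CARD('n)) *\<^sub>R g_flat l x"
  for a :: "'n::finite"
  by (simp add: vec_eq_iff sigma_flat_def g_flat_def kappa_def diff_divide_distrib left_diff_distrib)

lemma lie_metric_g_flat_coord_vf:
  "lie_metric (g_flat l) (coord_vf a z) x = (2 * (l $ a)\<^sup>2 * deriv z (x $ a)) *\<^sub>R dsq a"
proof -
  have "coord_vf a z x $ k * pd k (\<lambda>y. g_flat l y $ i $ j) x
      + g_flat l x $ k $ j * pd i (\<lambda>y. coord_vf a z y $ k) x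
      + g_flat l x $ i $ k * pd j (\<lambda>y. coord_vf a z y $ k) x
      = (if k = a then (if i = a \<and> j = a then 2 * (l $ a)\<^sup>2 * deriv z (x $ a) else 0) else 0)" for i j k
    by (auto simp: g_flat_def pd_coord_vf)
  then show ?thesis
    by (simp add: vec_eq_iff lie_metric_def)
qed

lemma conf_killing_g_flat_coord_vf:
  "conf_killing (g_flat l) (coord_vf a z) x = (2 * deriv z (x $ a)) *\<^sub>R sigma_flat a l x"
  by (simp add: conf_killing_def lie_metric_g_flat_coord_vf div_vf_g_flat_coord_vf sigma_flat_eq algebra_simps)

lemma g_flat_scaleR: "g_flat (r *\<^sub>R l) x = r\<^sup>2 *\<^sub>R g_flat l x"
  by (simp add: vec_eq_iff g_flat_def power_mult_distrib)

lemma powr_half_squared: "(c powr (e / 2))\<^sup>2 = c powr e" for c e :: real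
  by (simp add: power2_eq_square powr_add[symmetric])

lemma powr_qexp_root:
  assumes "n \<ge> 3" and "x > 0"
  shows "(x powr (1 / qexp n)) powr qexp n = x"
    and "(x powr (1 / qexp n)) powr ((qexp n - 2) / 2) = x powr (1 / real n)"
proof -
  have "qexp n \<noteq> 0" "1 / qexp n * ((qexp n - 2) / 2) = 1 / real n"
    using assms(1) by (simp_all add: qexp_def field_simps)
  then show "(x powr (1 / qexp n)) powr qexp n = x"
    and "(x powr (1 / qexp n)) powr ((qexp n - 2) / 2) = x powr (1 / real n)"
    using assms(2) by (simp_all add: powr_powr del: abs_divide)
qed

lemma cts_gbar_const: "cts_gbar g (\<lambda>_. c) = (\<lambda>x. c powr (qexp CARD('n) - 2) *\<^sub>R g x)"
  for g :: "real^'n::finite \<Rightarrow> real^'n^'n"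
  by (simp add: fun_eq_iff cts_gbar_def)

lemma cts_gbar_g_flat_const:
  "cts_gbar (g_flat l) (\<lambda>_. c) = g_flat (c powr ((qexp CARD('n) - 2) / 2) *\<^sub>R l)"
  for l :: "real^'n::finite"
  by (simp add: fun_eq_iff cts_gbar_const g_flat_scaleR powr_half_squared)

lemma cts_Kbar_g_flat_coord_vf:
  fixes a :: "'n::finite" and z :: "real \<Rightarrow> real"
  defines "q \<equiv> qexp CARD('n)"
  assumes c: "c > 0" and \<mu>: "\<mu> = \<tau> * c powr q" and z: "z differentiable (at (x $ a))"
  shows "cts_Kbar (g_flat l) (\<lambda>x. \<mu> *\<^sub>R sigma_flat a l x) \<tau> (coord_vf a z) N (\<lambda>_. c) (coord_vf a z) x
    = ((\<tau> + c powr (- q) * (1 / N x) * div_vf (g_flat l) (coord_vf a z) x) * c powr (q - 2) * (l $ a)\<^sup>2)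
        *\<^sub>R dsq a"
proof -
  define A where "A = c powr q"
  define B where "B = c powr 2"
  have "A > 0" "B > 0" "real CARD('n) > 0"
    using c by (simp_all add: A_def B_def)
  have powers: "c powr (-2) = 1 / B" "c powr (q - 2) = A / B" "c powr (- q) = 1 / A"
    "c powr (- 2 * q) = 1 / A\<^sup>2"
    by (simp_all add: A_def B_def powr_minus_divide powr_diff power2_eq_square powr_add[symmetric])
  have "deriv (\<lambda>s. A * z s) (x $ a) = A * deriv z (x $ a)"
    by (rule DERIV_imp_deriv) (auto intro!: derivative_eq_intros z simp: DERIV_deriv_iff_real_differentiable)
  then show ?thesis
    using \<open>A > 0\<close> \<open>B > 0\<close> \<open>real CARD('n) > 0\<close>
    unfolding cts_Kbar_def cts_gbar_const conf_killing_g_flat_coord_vf scaleR_coord_vf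
      div_vf_g_flat_coord_vf sigma_flat_eq \<mu> q_def[symmetric] A_def[symmetric] powers
    by (simp add: vec_eq_iff g_flat_def field_simps power2_eq_square)
qed

lemma smooth_real_differentiable: "smooth_real f \<Longrightarrow> f differentiable (at x)"
  using funpow_0 unfolding smooth_real_def by metis

lemma smooth_real_deriv: "smooth_real f \<Longrightarrow> smooth_real (deriv f)"
  unfolding smooth_real_def by (metis funpow_Suc_right o_apply)

lemma pds_const: "pds is (\<lambda>_. c) = (\<lambda>_. if is = [] then c else 0)"
  by (induction "is") simp_all

lemma smooth_fun_const: "smooth_fun (\<lambda>_::real^'n::finite. c)"
  unfolding smooth_fun_def pds_const by auto

lemma torus_fun_const: "torus_fun (\<lambda>_::real^'n::finite. c)"
  by (simp add: torus_fun_def periodic_fun_def smooth_fun_const)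

lemma pds_fun_coord:
  "pds is (\<lambda>x. h (x $ a)) =
     (\<lambda>x. if list_all (\<lambda>i. i = a) is then (deriv ^^ length is) h (x $ a) else 0)"
proof (induction "is")
  case (Cons i "is")
  show ?case
    by (rule ext, cases "list_all (\<lambda>i. i = a) is") (simp_all add: Cons.IH pd_fun_coord)
qed simp

lemma smooth_fun_coord:
  assumes "smooth_real h"
  shows "smooth_fun (\<lambda>x::real^'n::finite. h (x $ a))"
  unfolding smooth_fun_def pds_fun_coord
proof (intro allI conjI)
  fix "is" :: "'n list" and i and x :: "real^'n"
  let ?H = "(deriv ^^ length is) h"
  have H: "?H differentiable (at s)" for s
    using assms unfolding smooth_real_def by blast
  have "continuous_on UNIV ?H"
    using H by (simp add: continuous_at_imp_continuous_on differentiable_imp_continuous_within)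
  then have "continuous_on UNIV (\<lambda>x::real^'n. ?H (x $ a))"
    by (rule continuous_on_compose2) (auto intro: continuous_intros)
  then show "continuous_on UNIV (\<lambda>x::real^'n. if list_all (\<lambda>i. i = a) is then ?H (x $ a) else 0)"
    by (cases "list_all (\<lambda>i. i = a) is") simp_all
  have "(\<lambda>t. x $ a + t * axis i 1 $ a) differentiable (at 0)"
    by (auto intro!: derivative_intros)
  then have "(\<lambda>t. ?H (x $ a + t * axis i 1 $ a)) differentiable (at 0)"
    using differentiable_compose[OF H] by blast
  then show "(\<lambda>t. if list_all (\<lambda>i. i = a) is then ?H ((x + t *\<^sub>R axis i 1) $ a) else 0)
      differentiable (at 0)"
    by (cases "list_all (\<lambda>i. i = a) is") simp_all
qed

lemma torus_fun_coord:
  assumes "smooth_real h" and "\<forall>s. h (s + 1) = h s"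
  shows "torus_fun (\<lambda>x::real^'n::finite. h (x $ a))"
proof -
  have "h ((x + axis i 1) $ a) = h (x $ a)" for x :: "real^'n" and i
    using assms(2) by (cases "i = a") (auto simp: axis_def)
  then show ?thesis
    unfolding torus_fun_def periodic_fun_def using smooth_fun_coord[OF assms(1)] by blast
qed

lemma torus_vf_coord_vf:
  assumes "smooth_real z" and "\<forall>s. z (s + 1) = z s"
  shows "torus_vf (coord_vf a z)"
  unfolding torus_vf_def coord_vf_nth
proof
  fix k
  show "torus_fun (\<lambda>x. if k = a then z (x $ a) else 0)"
    using torus_fun_coord[OF assms] torus_fun_const by (cases "k = a") simp_all
qed

lemma cts_solution_g_flat_coord_vf:
  fixes a :: "'n::finite" and l :: "real^'n" and c \<mu> \<tau> :: real and nf zf :: "real \<Rightarrow> real"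
  defines "q \<equiv> qexp CARD('n)"
  defines "r \<equiv> c powr ((q - 2) / 2)"
  defines "K \<equiv> cts_Kbar (g_flat l) (\<lambda>x. \<mu> *\<^sub>R sigma_flat a l x) \<tau> (coord_vf a zf) (\<lambda>x. nf (x $ a))
                (\<lambda>_. c) (coord_vf a zf)"
  assumes c: "c > 0" and \<mu>: "\<mu> = \<tau> * c powr q" and l: "\<forall>k. l $ k \<noteq> 0"
    and nf: "smooth_real nf" "\<forall>s. nf s \<noteq> 0"
    and zf: "smooth_real zf" "\<forall>s. zf (s + 1) = zf s"
  shows "cts_solution (g_flat l) (\<lambda>x. \<mu> *\<^sub>R sigma_flat a l x) \<tau> (coord_vf a zf) (\<lambda>x. nf (x $ a))
           (\<lambda>_. c) (coord_vf a zf)"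
    and "K = (\<lambda>x. ((\<tau> + c powr (- q) * (1 / nf (x $ a)) * div_vf (g_flat l) (coord_vf a zf) x)
                  * (r * l $ a)\<^sup>2) *\<^sub>R dsq a)"
proof -
  have gbar: "cts_gbar (g_flat l) (\<lambda>_. c) = g_flat (r *\<^sub>R l)"
    unfolding r_def q_def by (rule cts_gbar_g_flat_const)
  show Kbar: "K = (\<lambda>x. ((\<tau> + c powr (- q) * (1 / nf (x $ a)) * div_vf (g_flat l) (coord_vf a zf) x)
                  * (r * l $ a)\<^sup>2) *\<^sub>R dsq a)"
    using cts_Kbar_g_flat_coord_vf[OF c \<mu>[unfolded q_def] smooth_real_differentiable[OF zf(1)]]
    by (simp add: fun_eq_iff K_def q_def r_def power_mult_distrib powr_half_squared)
  define f where "f s = (\<tau> + c powr (- q) * (1 / nf s) * deriv zf s) * (r * l $ a)\<^sup>2" for s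
  have "K = (\<lambda>x. f (x $ a) *\<^sub>R dsq a)"
    by (simp add: Kbar f_def div_vf_g_flat_coord_vf)
  moreover have "f differentiable (at s)" for s
    using smooth_real_differentiable[OF nf(1)] smooth_real_differentiable[OF smooth_real_deriv[OF zf(1)]] nf(2)
    unfolding f_def by (auto intro!: derivative_intros)
  ultimately have "constraint_eqs (g_flat (r *\<^sub>R l)) K"
    using l c by (auto intro!: constraint_eqs_g_flat_dsq simp: r_def)
  then show "cts_solution (g_flat l) (\<lambda>x. \<mu> *\<^sub>R sigma_flat a l x) \<tau> (coord_vf a zf) (\<lambda>x. nf (x $ a))
           (\<lambda>_. c) (coord_vf a zf)"
    using c torus_fun_const torus_vf_coord_vf[OF zf] gbar unfolding cts_solution_def K_def by auto
qed

theorem proposition7p3: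
  fixes a :: "'n::finite" and l :: "real^'n" and \<mu> \<tau> :: real
    and nf zf :: "real \<Rightarrow> real"
  defines "N \<equiv> (\<lambda>x::real^'n. nf (x $ a))"
    and "Z \<equiv> (\<lambda>x::real^'n. zf (x $ a) *\<^sub>R axis a 1)"
    and "q \<equiv> qexp CARD('n)"
  assumes n3: "CARD('n) \<ge> 3"
    and lpos: "\<forall>k. l $ k > 0"
    and N_smooth: "smooth_real nf" and N_per: "\<forall>s. nf (s + 1) = nf s"
    and N_pos: "\<forall>s. nf s > 0"
    and z_smooth: "smooth_real zf" and z_per: "\<forall>s. zf (s + 1) = zf s"
  shows
    "(\<mu> \<noteq> 0 \<and> \<tau> \<noteq> 0 \<and> \<mu> * \<tau> > 0 \<longrightarrow>
       (let c = (\<mu> / \<tau>) powr (1 / q); r = c powr ((q - 2) / 2);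
            \<tau>b = (\<lambda>x. \<tau> + c powr (- q) * (1 / N x) * div_vf (g_flat l) Z x) in
        cts_solution (g_flat l) (\<lambda>x. \<mu> *\<^sub>R sigma_flat a l x) \<tau> Z N (\<lambda>_. c) Z \<and>
        cts_gbar (g_flat l) (\<lambda>_. c) = g_flat (r *\<^sub>R l) \<and>
        cts_Kbar (g_flat l) (\<lambda>x. \<mu> *\<^sub>R sigma_flat a l x) \<tau> Z N (\<lambda>_. c) Z
          = (\<lambda>x. (\<tau>b x * (r * l $ a)\<^sup>2) *\<^sub>R dsq a) \<and>
        r = (\<mu> / \<tau>) powr (1 / real CARD('n))))
     \<and>
     (\<mu> = 0 \<and> \<tau> = 0 \<longrightarrow>
       (\<forall>c::real. c > 0 \<longrightarrow>
         (let r = c powr ((q - 2) / 2);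
              \<tau>b = (\<lambda>x. c powr (- q) * (1 / N x) * div_vf (g_flat l) Z x) in
          cts_solution (g_flat l) (\<lambda>x. \<mu> *\<^sub>R sigma_flat a l x) \<tau> Z N (\<lambda>_. c) Z \<and>
          cts_gbar (g_flat l) (\<lambda>_. c) = g_flat (r *\<^sub>R l) \<and>
          cts_Kbar (g_flat l) (\<lambda>x. \<mu> *\<^sub>R sigma_flat a l x) \<tau> Z N (\<lambda>_. c) Z
            = (\<lambda>x. (\<tau>b x * (r * l $ a)\<^sup>2) *\<^sub>R dsq a))))"
proof -
  have Z: "Z = coord_vf a zf"
    by (simp add: Z_def fun_eq_iff coord_vf_def)
  have l: "\<forall>k. l $ k \<noteq> 0" and N: "\<forall>s. nf s \<noteq> 0"
    using lpos N_pos by (metis less_irrefl)+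
  have sol: "cts_solution (g_flat l) (\<lambda>x. \<mu> *\<^sub>R sigma_flat a l x) \<tau> Z N (\<lambda>_. c) Z \<and>
      cts_gbar (g_flat l) (\<lambda>_. c) = g_flat (c powr ((q - 2) / 2) *\<^sub>R l) \<and>
      cts_Kbar (g_flat l) (\<lambda>x. \<mu> *\<^sub>R sigma_flat a l x) \<tau> Z N (\<lambda>_. c) Z =
        (\<lambda>x. ((\<tau> + c powr (- q) * (1 / N x) * div_vf (g_flat l) Z x)
               * (c powr ((q - 2) / 2) * l $ a)\<^sup>2) *\<^sub>R dsq a)"
    if "c > 0" "\<tau> * c powr q = \<mu>" for c
    using cts_solution_g_flat_coord_vf[OF that(1) that(2)[symmetric, unfolded q_def] l N_smooth N z_smooth z_per,
        where a = a] cts_gbar_g_flat_const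
    unfolding Z N_def q_def by simp
  have root: "(\<mu> / \<tau>) powr (1 / q) > 0 \<and> \<tau> * ((\<mu> / \<tau>) powr (1 / q)) powr q = \<mu> \<and>
      ((\<mu> / \<tau>) powr (1 / q)) powr ((q - 2) / 2) = (\<mu> / \<tau>) powr (1 / real CARD('n))"
    if "\<mu> \<noteq> 0 \<and> \<tau> \<noteq> 0 \<and> \<mu> * \<tau> > 0"
  proof -
    have "\<mu> / \<tau> > 0"
      using that by (simp add: zero_less_divide_iff zero_less_mult_iff)
    then show ?thesis
      using that powr_qexp_root[OF n3 \<open>\<mu> / \<tau> > 0\<close>] unfolding q_def by simp
  qed
  show ?thesis
    using root sol[of "(\<mu> / \<tau>) powr (1 / q)"] sol unfolding Let_def by auto
qed

end
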